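(* If a non-P-point $\mathcal W$ in standard position on $\omega^2$ is $(2,4)$-weakly Ramsey, then $\mathcal W$ has the three-functions property: for every function $f$ on $\omega^2$ there is $H\in\mathcal W$ such that $f\restriction H$ is constant, or one-to-one, or equal to $g\circ\pi_1\restriction H$ for some one-to-one function $g$ on $\omega$.
   Context: Ultrafilters are nonprincipal. $\pi_1:\omega^2\to\omega$ is the first projection. A non-P-point in standard position is an ultrafilter $\mathcal W$ on $\omega^2$ such that $\pi_1$ is neither finite-to-one nor constant on any set in $\mathcal W$. $\mathcal W$ is $(n,t)$-weakly Ramsey if whenever $[\omega^2]^n$ is partitioned into finitely many pieces there is $H\in\mathcal W$ with $[H]^n$ meeting at most $t$ pieces. *)

theory Defs
  imports Main "HOL-Library.Ramsey"
begin

definition is_ultrafilter :: "'a set set \<Rightarrow> bool" where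
  "is_ultrafilter U \<longleftrightarrow>
     {} \<notin> U \<and> UNIV \<in> U \<and>
     (\<forall>A B. A \<in> U \<and> A \<subseteq> B \<longrightarrow> B \<in> U) \<and>
     (\<forall>A B. A \<in> U \<and> B \<in> U \<longrightarrow> A \<inter> B \<in> U) \<and>
     (\<forall>A. A \<in> U \<or> - A \<in> U)"

definition nonprincipal_ultrafilter :: "'a set set \<Rightarrow> bool" where
  "nonprincipal_ultrafilter U \<longleftrightarrow> is_ultrafilter U \<and> (\<forall>A\<in>U. infinite A)"

definition non_P_point_std :: "(nat \<times> nat) set set \<Rightarrow> bool" where
  "non_P_point_std W \<longleftrightarrow> nonprincipal_ultrafilter W \<and>
     (\<forall>A\<in>W. \<not> (\<forall>n. finite {x\<in>A. fst x = n}) \<and> \<not> (\<exists>n. \<forall>x\<in>A. fst x = n))"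

text \<open>(n,t)-weakly Ramsey: for every partition of [omega^2]^n into finitely many
  pieces (given by a colouring c with values below k) there is H in W such that
  [H]^n meets at most t pieces.\<close>
definition weakly_Ramsey :: "nat \<Rightarrow> nat \<Rightarrow> 'a set set \<Rightarrow> bool" where
  "weakly_Ramsey n t W \<longleftrightarrow>
     (\<forall>(c :: 'a set \<Rightarrow> nat) k. (\<forall>s\<in>[UNIV]\<^bsup>n\<^esup>. c s < k) \<longrightarrow>
        (\<exists>H\<in>W. card (c ` [H]\<^bsup>n\<^esup>) \<le> t))"

definition three_functions_property :: "(nat \<times> nat) set set \<Rightarrow> bool" where
  "three_functions_property W \<longleftrightarrow>
     (\<forall>f :: nat \<times> nat \<Rightarrow> nat. \<exists>H\<in>W.
        (\<exists>c. \<forall>x\<in>H. f x = c) \<or> inj_on f H \<or>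
        (\<exists>g :: nat \<Rightarrow> nat. inj g \<and> (\<forall>x\<in>H. f x = g (fst x))))"

end

theory Submission
  imports Defs "HOL-Library.Product_Lexorder"
begin

text \<open>Colour a pair \<open>x < y\<close> of \<open>\<omega>\<^sup>2\<close> (lexicographic order) by whether \<open>x\<close>, \<open>y\<close> lie in the same
  column, how \<open>f x\<close> compares with \<open>f y\<close>, and, for different columns, whether \<open>snd x < snd y\<close> and
  whether \<open>snd x < fst y\<close>. Take \<open>H \<in> W\<close> on which at most four colours occur.

  If the points of \<open>H\<close> with finitely many same-column, same-value partners form a set in
  \<open>W\<close>, shrink it so that all its columns are infinite; then \<open>f\<close> is unbounded on each
  column, which produces four colours none of which a pair with equal values can have,
  so \<open>f\<close> is one-to-one. Otherwise every point has such partners arbitrarily high in its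
  column, so colour \<open>0\<close> occurs and every pair in different columns with comparison code \<open>r\<close>
  contributes two colours \<open>3 + 4r\<close> and \<open>5 + 4r + e\<close>. Forbidding a fifth colour forces \<open>f\<close> to
  be constant on columns and \<open>r\<close> to be the same for all such pairs: \<open>r = 0\<close> makes \<open>f\<close>
  constant, \<open>r \<noteq> 0\<close> makes \<open>f = g \<circ> fst\<close> with \<open>g\<close> one-to-one on the columns used.\<close>

lemma ultrafilter_mono:
  "is_ultrafilter U \<Longrightarrow> A \<in> U \<Longrightarrow> A \<subseteq> B \<Longrightarrow> B \<in> U"
  unfolding is_ultrafilter_def by blast

lemma ultrafilter_Int:
  "is_ultrafilter U \<Longrightarrow> A \<in> U \<Longrightarrow> B \<in> U \<Longrightarrow> A \<inter> B \<in> U"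
  unfolding is_ultrafilter_def by blast

lemma ultrafilter_nonempty: "is_ultrafilter U \<Longrightarrow> A \<in> U \<Longrightarrow> A \<noteq> {}"
  unfolding is_ultrafilter_def by blast

lemma ultrafilter_split:
  assumes "is_ultrafilter U" "S \<in> U"
  shows "{x\<in>S. P x} \<in> U \<or> {x\<in>S. \<not> P x} \<in> U"
proof -
  have "{x. P x} \<in> U \<or> - {x. P x} \<in> U"
    using assms(1) unfolding is_ultrafilter_def by blast
  moreover have "{x\<in>S. P x} = S \<inter> {x. P x}" "{x\<in>S. \<not> P x} = S \<inter> - {x. P x}"
    by auto
  ultimately show ?thesis
    using ultrafilter_Int[OF assms] by metis
qed

lemma ultrafilter_finite_UN:
  assumes "is_ultrafilter U" "finite I" "(\<Union>i\<in>I. A i) \<in> U"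
  shows "\<exists>i\<in>I. A i \<in> U"
  using assms(2,3)
proof (induction I rule: finite_induct)
  case empty
  then show ?case using ultrafilter_nonempty[OF assms(1)] by auto
next
  case (insert i I)
  let ?B = "\<Union>j\<in>I. A j"
  have "?B \<union> A i \<in> U" using insert.prems by (simp add: Un_commute)
  moreover have "{x\<in>?B \<union> A i. x \<in> A i} \<subseteq> A i" "{x\<in>?B \<union> A i. x \<notin> A i} \<subseteq> ?B"
    by blast+
  ultimately have "A i \<in> U \<or> ?B \<in> U"
    using ultrafilter_split[OF assms(1), of "?B \<union> A i" "\<lambda>x. x \<in> A i"]
      ultrafilter_mono[OF assms(1)] by blast
  then show ?case using insert.IH by blast
qed

definition column :: "(nat \<times> nat) set \<Rightarrow> nat \<Rightarrow> (nat \<times> nat) set" where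
  "column S n = {x\<in>S. fst x = n}"

lemma non_P_point_std_ultrafilter: "non_P_point_std W \<Longrightarrow> is_ultrafilter W"
  unfolding non_P_point_std_def nonprincipal_ultrafilter_def by blast

lemma non_P_point_std_fst_unbounded:
  assumes "non_P_point_std W" "S \<in> W"
  shows "\<exists>x\<in>S. N < fst x"
proof (rule ccontr)
  assume "\<not> ?thesis"
  then have "S = (\<Union>n\<le>N. column S n)" by (force simp: column_def)
  then obtain n where "column S n \<in> W"
    using ultrafilter_finite_UN[OF non_P_point_std_ultrafilter[OF assms(1)]] assms(2)
    by (metis finite_atMost)
  then show False using assms(1) unfolding non_P_point_std_def column_def by auto
qed

lemma non_P_point_std_infinite_columns:
  assumes "non_P_point_std W" "S \<in> W"
  shows "{x\<in>S. infinite (column S (fst x))} \<in> W"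
proof (rule ccontr)
  let ?T = "{x\<in>S. finite (column S (fst x))}"
  assume "\<not> ?thesis"
  then have "?T \<in> W"
    using ultrafilter_split[OF non_P_point_std_ultrafilter[OF assms(1)] assms(2),
        of "\<lambda>x. infinite (column S (fst x))"]
    by simp
  moreover have "finite {x\<in>?T. fst x = n}" for n
  proof (cases "\<exists>x\<in>?T. fst x = n")
    case True
    then obtain x where "x \<in> ?T" "fst x = n" by blast
    then show ?thesis
      by (auto intro: finite_subset[of _ "column S (fst x)"] simp: column_def)
  next
    case False
    then have "{x\<in>?T. fst x = n} = {}" by blast
    then show ?thesis by (simp only: finite.emptyI)
  qed
  ultimately show False using assms(1) unfolding non_P_point_std_def by blast
qed

lemma infinite_finite_to_one_above:
  fixes g :: "'a \<Rightarrow> nat"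
  assumes "infinite C" "\<And>v. finite {y\<in>C. g y = v}"
  shows "infinite {y\<in>C. M < g y}"
proof
  assume "finite {y\<in>C. M < g y}"
  moreover have "{y\<in>C. g y \<le> M} = (\<Union>v\<le>M. {y\<in>C. g y = v})" by auto
  then have "finite {y\<in>C. g y \<le> M}" using assms(2) by simp
  moreover have "C = {y\<in>C. M < g y} \<union> {y\<in>C. g y \<le> M}" by auto
  ultimately show False using assms(1) by (metis finite_Un)
qed

lemma snd_finite_to_one_on_column: "finite {y\<in>column S n. snd y = v}"
  by (rule finite_subset[of _ "{(n, v)}"]) (auto simp: column_def prod_eq_iff)

definition column_fibre :: "(nat \<times> nat \<Rightarrow> nat) \<Rightarrow> (nat \<times> nat) set \<Rightarrow> nat \<times> nat \<Rightarrow> (nat \<times> nat) set" where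
  "column_fibre f S x = {y\<in>S. fst y = fst x \<and> f y = f x}"

definition column_spread :: "(nat \<times> nat \<Rightarrow> nat) \<Rightarrow> (nat \<times> nat) set \<Rightarrow> bool" where
  "column_spread f S \<longleftrightarrow> (\<forall>x\<in>S. \<forall>M N. \<exists>y\<in>S. fst y = fst x \<and> M < snd y \<and> N < f y)"

definition column_repeating :: "(nat \<times> nat \<Rightarrow> nat) \<Rightarrow> (nat \<times> nat) set \<Rightarrow> bool" where
  "column_repeating f S \<longleftrightarrow> (\<forall>x\<in>S. \<forall>M. \<exists>y\<in>S. fst y = fst x \<and> f y = f x \<and> M < snd y)"

lemma column_repeating_infinite_fibres:
  "column_repeating f {x\<in>S. infinite (column_fibre f S x)}"
  unfolding column_repeating_def
proof (intro ballI allI)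
  fix x M assume "x \<in> {x\<in>S. infinite (column_fibre f S x)}"
  then have "infinite (column_fibre f S x)" by simp
  moreover have "finite {y\<in>column_fibre f S x. snd y = v}" for v
    by (rule finite_subset[OF _ snd_finite_to_one_on_column[of S "fst x" v]])
      (auto simp: column_fibre_def column_def)
  ultimately have "infinite {y\<in>column_fibre f S x. M < snd y}"
    by (rule infinite_finite_to_one_above)
  then obtain y where y: "y \<in> column_fibre f S x" "M < snd y"
    using infinite_imp_nonempty by blast
  then have "column_fibre f S y = column_fibre f S x"
    by (auto simp: column_fibre_def)
  with y \<open>infinite (column_fibre f S x)\<close>
  show "\<exists>y\<in>{x\<in>S. infinite (column_fibre f S x)}. fst y = fst x \<and> f y = f x \<and> M < snd y"
    unfolding column_fibre_def by (intro bexI[of _ y]) auto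
qed

lemma non_P_point_std_column_spread_subset:
  assumes "non_P_point_std W" "S \<in> W" and finite_fibres: "\<And>x. x \<in> S \<Longrightarrow> finite (column_fibre f S x)"
  shows "\<exists>S'\<in>W. S' \<subseteq> S \<and> column_spread f S'"
proof (intro bexI conjI)
  let ?S' = "{x\<in>S. infinite (column S (fst x))}"
  show "?S' \<in> W" using non_P_point_std_infinite_columns[OF assms(1,2)] .
  show "?S' \<subseteq> S" by blast
  show "column_spread f ?S'"
    unfolding column_spread_def
  proof (intro ballI allI)
    fix x M N assume "x \<in> ?S'"
    let ?C = "column S (fst x)"
    have f_finite_to_one: "finite {y\<in>?C. f y = v}" for v
    proof (cases "\<exists>y0\<in>?C. f y0 = v")
      case True
      then obtain y0 where "y0 \<in> ?C" "f y0 = v" by blast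
      then have "{y\<in>?C. f y = v} = column_fibre f S y0"
        by (auto simp: column_def column_fibre_def)
      then show ?thesis using finite_fibres \<open>y0 \<in> ?C\<close> by (simp add: column_def)
    next
      case False
      then have "{y\<in>?C. f y = v} = {}" by blast
      then show ?thesis by (simp only: finite.emptyI)
    qed
    have "infinite ?C" using \<open>x \<in> ?S'\<close> by simp
    then have "infinite {y\<in>?C. M < snd y}"
      using snd_finite_to_one_on_column by (rule infinite_finite_to_one_above)
    then have "infinite {y\<in>{y\<in>?C. M < snd y}. N < f y}"
      by (rule infinite_finite_to_one_above)
        (rule finite_subset[OF _ f_finite_to_one], auto)
    then obtain y where y: "y \<in> ?C" "M < snd y" "N < f y"
      using infinite_imp_nonempty by blast
    then have "column S (fst y) = ?C" by (simp add: column_def)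
    with y \<open>infinite ?C\<close> show "\<exists>y\<in>?S'. fst y = fst x \<and> M < snd y \<and> N < f y"
      unfolding column_def by (intro bexI[of _ y]) auto
  qed
qed

lemma nsets_2_ordered:
  fixes s :: "'a::linorder set"
  assumes "s \<in> [A]\<^bsup>2\<^esup>"
  obtains x y where "s = {x, y}" "x < y"
proof -
  obtain x y where "s = {x, y}" "x \<noteq> y"
    using assms unfolding nsets_def card_2_iff by blast
  then show ?thesis
    using that[of x y] that[of y x] by (cases "x < y") (auto simp: insert_commute)
qed

lemma weakly_Ramsey_ordered_pairs:
  fixes c :: "'a::linorder \<Rightarrow> 'a \<Rightarrow> nat"
  assumes "weakly_Ramsey 2 t W" and bounded: "\<And>x y. x < y \<Longrightarrow> c x y < k"
  obtains H K where "H \<in> W" "finite K" "card K \<le> t"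
    "\<And>x y. x \<in> H \<Longrightarrow> y \<in> H \<Longrightarrow> x < y \<Longrightarrow> c x y \<in> K"
proof -
  define c2 where "c2 s = c (Min s) (Max s)" for s :: "'a set"
  have c2_pair: "c2 {x, y} = c x y" if "x < y" for x y
    using that by (simp add: c2_def)
  have c2_less: "c2 s < k" if s2: "s \<in> [UNIV]\<^bsup>2\<^esup>" for s
  proof -
    obtain x y where "s = {x, y}" "x < y" using s2 by (rule nsets_2_ordered)
    then show ?thesis using c2_pair bounded by simp
  qed
  with assms(1) obtain H where "H \<in> W" "card (c2 ` [H]\<^bsup>2\<^esup>) \<le> t"
    unfolding weakly_Ramsey_def by blast
  moreover have "finite (c2 ` [H]\<^bsup>2\<^esup>)"
  proof (rule finite_subset[of _ "{..<k}"])
    show "c2 ` [H]\<^bsup>2\<^esup> \<subseteq> {..<k}"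
      using c2_less by (auto simp: nsets_def)
  qed simp
  moreover have "c x y \<in> c2 ` [H]\<^bsup>2\<^esup>" if "x \<in> H" "y \<in> H" "x < y" for x y
  proof -
    have "{x, y} \<in> [H]\<^bsup>2\<^esup>" using that by (auto simp: nsets_def)
    then show ?thesis using c2_pair[OF \<open>x < y\<close>] by (metis image_eqI)
  qed
  ultimately show ?thesis using that by blast
qed

lemma inj_if_then_else:
  assumes "inj_on h A" "inj e" "h ` A \<inter> range e = {}"
  shows "inj (\<lambda>n. if n \<in> A then h n else e n)"
proof (rule injI)
  fix m n assume eq: "(if m \<in> A then h m else e m) = (if n \<in> A then h n else e n)"
  show "m = n"
  proof (cases "m \<in> A"; cases "n \<in> A")
    assume "m \<in> A" "n \<in> A" then show ?thesis using eq assms(1) by (simp add: inj_on_def)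
  next
    assume "m \<notin> A" "n \<notin> A" then show ?thesis using eq assms(2) by (simp add: inj_eq)
  next
    assume "m \<in> A" "n \<notin> A" then show ?thesis using eq assms(3) by auto
  next
    assume "m \<notin> A" "n \<in> A" then show ?thesis using eq assms(3) by (metis disjoint_iff imageI rangeI)
  qed
qed

definition order_code :: "nat \<Rightarrow> nat \<Rightarrow> nat" where
  "order_code u v = (if u = v then 0 else if u < v then 1 else 2)"

definition pair_colour :: "(nat \<times> nat \<Rightarrow> nat) \<Rightarrow> nat \<times> nat \<Rightarrow> nat \<times> nat \<Rightarrow> nat" where
  "pair_colour f x y =
     (if fst x = fst y then order_code (f x) (f y)
      else 3 + 4 * order_code (f x) (f y) + 2 * of_bool (snd x < snd y) + of_bool (snd x < fst y))"

lemma order_code_eq_0_iff: "order_code u v = 0 \<longleftrightarrow> u = v"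
  by (simp add: order_code_def)

lemma pair_colour_less: "pair_colour f x y < 15"
  by (simp add: pair_colour_def order_code_def)

lemma ultrafilter_factor_through_fst:
  fixes f :: "nat \<times> nat \<Rightarrow> nat"
  assumes "is_ultrafilter W" "S \<in> W"
    and const_on_columns: "\<And>x y. x \<in> S \<Longrightarrow> y \<in> S \<Longrightarrow> fst x = fst y \<Longrightarrow> f x = f y"
    and inj_across_columns: "\<And>x y. x \<in> S \<Longrightarrow> y \<in> S \<Longrightarrow> fst x \<noteq> fst y \<Longrightarrow> f x \<noteq> f y"
  shows "\<exists>S'\<in>W. \<exists>g. inj g \<and> (\<forall>x\<in>S'. f x = g (fst x))"
proof -
  have "{x\<in>S. even (f x) = True} \<in> W \<or> {x\<in>S. even (f x) = False} \<in> W"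
    using ultrafilter_split[OF assms(1,2), of "\<lambda>x. even (f x)"] by simp
  then obtain b where S'W: "{x\<in>S. even (f x) = b} \<in> W" by blast
  define h where "h n = f (SOME x. x \<in> S \<and> fst x = n)" for n
  have f_eq_h: "f x = h (fst x)" if "x \<in> S" for x
  proof -
    have "(SOME y. y \<in> S \<and> fst y = fst x) \<in> S \<and> fst (SOME y. y \<in> S \<and> fst y = fst x) = fst x"
      using someI[of "\<lambda>y. y \<in> S \<and> fst y = fst x" x] that by blast
    then show ?thesis unfolding h_def using const_on_columns that by metis
  qed
  let ?A = "fst ` {x\<in>S. even (f x) = b}"
  \<comment> \<open>\<open>h\<close> has parity \<open>b\<close> on \<open>?A\<close>; outside \<open>?A\<close>, \<open>g\<close> takes values of the other parity\<close>
  define g where "g n = (if n \<in> ?A then h n else 2 * n + of_bool b)" for n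
  have "inj_on h ?A"
    by (rule inj_onI) (use f_eq_h inj_across_columns in fastforce)
  moreover have "inj (\<lambda>n::nat. 2 * n + of_bool b)"
    by (simp add: inj_on_def)
  moreover have "h ` ?A \<inter> range (\<lambda>n. 2 * n + of_bool b) = {}"
    using f_eq_h by fastforce
  ultimately have "inj g"
    unfolding g_def by (rule inj_if_then_else)
  moreover have "f x = g (fst x)" if "x \<in> {x\<in>S. even (f x) = b}" for x
  proof -
    have "fst x \<in> ?A" using that by blast
    then show ?thesis using f_eq_h that by (simp add: g_def)
  qed
  ultimately show ?thesis using S'W by blast
qed

locale few_pair_colours =
  fixes f :: "nat \<times> nat \<Rightarrow> nat" and H :: "(nat \<times> nat) set" and K :: "nat set"
  assumes finite_K: "finite K" and card_K: "card K \<le> 4"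
    and pair_colour_in_K: "\<And>x y. x \<in> H \<Longrightarrow> y \<in> H \<Longrightarrow> x < y \<Longrightarrow> pair_colour f x y \<in> K"
begin

lemma not_five_colours:
  assumes "{a, b, c, d, e} \<subseteq> K"
  shows "\<not> distinct [a, b, c, d, e]"
proof
  assume "distinct [a, b, c, d, e]"
  then have "card {a, b, c, d, e} = 5" by simp
  moreover have "card {a, b, c, d, e} \<le> card K" using card_mono[OF finite_K assms] .
  ultimately show False using card_K by simp
qed

lemma inj_on_column_spread:
  assumes "S \<subseteq> H" and spread: "column_spread f S" and unbounded: "\<And>N. \<exists>z\<in>S. N < fst z"
  shows "inj_on f S"
proof (rule linorder_inj_onI')
  have colour: "pair_colour f x y \<in> K" if "x \<in> S" "y \<in> S" "x < y" for x y
    using pair_colour_in_K that \<open>S \<subseteq> H\<close> by blast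
  have above: "\<exists>y\<in>S. fst y = fst x \<and> M < snd y \<and> N < f y" if "x \<in> S" for x M N
    using spread that unfolding column_spread_def by blast
  \<comment> \<open>the points below exhibit the colours \<open>1, 9, 10, 11\<close>; a pair with \<open>f p = f q\<close> has colour \<open>0\<close> or \<open>3..6\<close>\<close>
  obtain x0 where x0: "x0 \<in> S" using unbounded by blast
  obtain z where z: "z \<in> S" "fst x0 + snd x0 < fst z" using unbounded by blast
  obtain y1 where y1: "y1 \<in> S" "fst y1 = fst x0" "snd x0 < snd y1" "f x0 < f y1"
    using above[OF x0] by blast
  obtain y2 where y2: "y2 \<in> S" "fst y2 = fst z" "snd x0 < snd y2" "f x0 < f y2"
    using above[OF z(1)] by blast
  obtain x1 where x1: "x1 \<in> S" "fst x1 = fst x0" "fst z < snd x1"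
    using above[OF x0] by blast
  obtain y3 where y3: "y3 \<in> S" "fst y3 = fst z" "snd x1 < snd y3" "f x1 < f y3"
    using above[OF z(1)] by blast
  obtain x2 where x2: "x2 \<in> S" "fst x2 = fst x0" "fst z + snd z < snd x2" "f z < f x2"
    using above[OF x0] by blast
  have "pair_colour f x0 y1 = 1" "pair_colour f x1 y3 = 9"
    "pair_colour f x0 y2 = 10" "pair_colour f x2 z = 11"
    using y1 y2 y3 x1 x2 z by (auto simp: pair_colour_def order_code_def)
  moreover have "x0 < y1" "x1 < y3" "x0 < y2" "x2 < z"
    using y1 y2 y3 x1 x2 z by (auto simp: less_prod_def')
  ultimately have four_colours: "{1, 9, 10, 11} \<subseteq> K"
    using colour x0 x1 x2 y1 y2 y3 z by (metis empty_subsetI insert_subset)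
  fix p q assume pq: "p \<in> S" "q \<in> S" "p < q"
  show "f p \<noteq> f q"
  proof
    assume "f p = f q"
    then have "pair_colour f p q \<notin> {1, 9, 10, 11}"
      by (auto simp: pair_colour_def order_code_def)
    with four_colours colour[OF pq] show False
      using not_five_colours[of 1 9 10 11 "pair_colour f p q"] by auto
  qed
qed

context
  fixes S assumes S_H: "S \<subseteq> H" and repeating: "column_repeating f S"
begin

lemma repeating_partner_above:
  "x \<in> S \<Longrightarrow> \<exists>y\<in>S. fst y = fst x \<and> f y = f x \<and> M < snd y"
  using repeating unfolding column_repeating_def by blast

lemma colour_in_K: "x \<in> S \<Longrightarrow> y \<in> S \<Longrightarrow> x < y \<Longrightarrow> pair_colour f x y \<in> K"
  using pair_colour_in_K S_H by blast

lemma repeating_colour_zero: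
  assumes "x \<in> S"
  shows "0 \<in> K"
proof -
  obtain y where y: "y \<in> S" "fst y = fst x" "f y = f x" "snd x < snd y"
    using repeating_partner_above[OF assms] by blast
  then have "pair_colour f x y = 0" "x < y"
    by (simp_all add: pair_colour_def order_code_def less_prod_def')
  then show ?thesis using colour_in_K assms y(1) by metis
qed

lemma repeating_colours_across:
  assumes "x \<in> S" "y \<in> S" "fst x < fst y"
  shows "3 + 4 * order_code (f x) (f y) \<in> K"
    and "\<exists>e\<le>1. 5 + 4 * order_code (f x) (f y) + e \<in> K"
proof -
  obtain x' where x': "x' \<in> S" "fst x' = fst x" "f x' = f x" "fst y + snd y < snd x'"
    using repeating_partner_above[OF assms(1)] by blast
  then have "pair_colour f x' y = 3 + 4 * order_code (f x) (f y)"
    using assms by (simp add: pair_colour_def)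
  moreover have "x' < y" using x' assms by (simp add: less_prod_def')
  ultimately show "3 + 4 * order_code (f x) (f y) \<in> K"
    using colour_in_K x' assms by metis
  obtain y' where y': "y' \<in> S" "fst y' = fst y" "f y' = f y" "snd x < snd y'"
    using repeating_partner_above[OF assms(2)] by blast
  then have "pair_colour f x y' = 5 + 4 * order_code (f x) (f y) + of_bool (snd x < fst y)"
    using assms by (simp add: pair_colour_def)
  moreover have "x < y'" using y' assms by (simp add: less_prod_def')
  ultimately show "\<exists>e\<le>1. 5 + 4 * order_code (f x) (f y) + e \<in> K"
    using colour_in_K y' assms by (metis of_bool_less_eq_one)
qed

lemma repeating_const_on_columns:
  assumes "u \<in> S" "v \<in> S" "fst u < fst v" "x \<in> S" "y \<in> S" "fst x = fst y"
  shows "f x = f y"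
proof -
  have False if xy: "x \<in> S" "y \<in> S" "fst x = fst y" "f x < f y" for x y
  proof -
    obtain y' where y': "y' \<in> S" "fst y' = fst y" "f y' = f y" "snd x < snd y'"
      using repeating_partner_above[OF xy(2)] by blast
    then have "pair_colour f x y' = 1" "x < y'"
      using xy by (simp_all add: pair_colour_def order_code_def less_prod_def')
    then have "1 \<in> K" using colour_in_K xy(1) y'(1) by metis
    obtain x' where x': "x' \<in> S" "fst x' = fst x" "f x' = f x" "snd y < snd x'"
      using repeating_partner_above[OF xy(1)] by blast
    then have "pair_colour f y x' = 2" "y < x'"
      using xy by (simp_all add: pair_colour_def order_code_def less_prod_def')
    then have "2 \<in> K" using colour_in_K xy(2) x'(1) by metis
    obtain e where "e \<le> 1" "5 + 4 * order_code (f u) (f v) + e \<in> K"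
      using repeating_colours_across(2)[OF assms(1-3)] by blast
    with \<open>1 \<in> K\<close> \<open>2 \<in> K\<close> repeating_colour_zero[OF assms(1)]
      repeating_colours_across(1)[OF assms(1-3)]
    show False
      using not_five_colours[of 0 1 2 "3 + 4 * order_code (f u) (f v)"
          "5 + 4 * order_code (f u) (f v) + e"] by auto
  qed
  then show ?thesis using assms(4-6) by (metis linorder_neqE_nat)
qed

lemma repeating_order_code_uniform:
  assumes "x \<in> S" "y \<in> S" "fst x < fst y" "u \<in> S" "v \<in> S" "fst u < fst v"
  shows "order_code (f x) (f y) = order_code (f u) (f v)"
proof (rule ccontr)
  assume ne: "order_code (f x) (f y) \<noteq> order_code (f u) (f v)"
  obtain e1 where "e1 \<le> 1" "5 + 4 * order_code (f x) (f y) + e1 \<in> K"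
    using repeating_colours_across(2)[OF assms(1-3)] by blast
  moreover obtain e2 where "e2 \<le> 1" "5 + 4 * order_code (f u) (f v) + e2 \<in> K"
    using repeating_colours_across(2)[OF assms(4-6)] by blast
  ultimately show False
    using ne repeating_colour_zero[OF assms(1)] repeating_colours_across(1)[OF assms(1-3)]
      repeating_colours_across(1)[OF assms(4-6)]
      not_five_colours[of 0 "3 + 4 * order_code (f x) (f y)" "5 + 4 * order_code (f x) (f y) + e1"
        "3 + 4 * order_code (f u) (f v)" "5 + 4 * order_code (f u) (f v) + e2"]
    by auto
qed

lemma repeating_const_or_factors_through_fst:
  assumes "non_P_point_std W" "S \<in> W"
  shows "\<exists>S'\<in>W. (\<exists>c. \<forall>x\<in>S'. f x = c) \<or> (\<exists>g. inj g \<and> (\<forall>x\<in>S'. f x = g (fst x)))"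
proof -
  obtain u where u: "u \<in> S" using non_P_point_std_fst_unbounded[OF assms] by blast
  obtain v where v: "v \<in> S" "fst u < fst v" using non_P_point_std_fst_unbounded[OF assms] by blast
  note const_on_columns = repeating_const_on_columns[OF u v]
  have across: "f x = f y \<longleftrightarrow> f u = f v"
    if "x \<in> S" "y \<in> S" "fst x \<noteq> fst y" for x y
  proof (cases "fst x < fst y")
    case True
    then have "order_code (f x) (f y) = order_code (f u) (f v)"
      by (rule repeating_order_code_uniform[OF that(1,2) _ u v])
    then show ?thesis by (metis order_code_eq_0_iff)
  next
    case False
    then have "fst y < fst x" using that(3) by simp
    then have "order_code (f y) (f x) = order_code (f u) (f v)"
      by (rule repeating_order_code_uniform[OF that(2,1) _ u v])
    then show ?thesis by (metis order_code_eq_0_iff)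
  qed
  show ?thesis
  proof (cases "f u = f v")
    case True
    have "f x = f u" if "x \<in> S" for x
    proof (cases "fst x = fst u")
      case True
      then show ?thesis by (rule const_on_columns[OF that u])
    next
      case False
      then show ?thesis using across[OF that u] \<open>f u = f v\<close> by blast
    qed
    then show ?thesis using assms(2) by blast
  next
    case False
    then have "f x \<noteq> f y" if "x \<in> S" "y \<in> S" "fst x \<noteq> fst y" for x y
      using across[OF that] by blast
    with ultrafilter_factor_through_fst[OF non_P_point_std_ultrafilter[OF assms(1)] assms(2)]
    have "\<exists>S'\<in>W. \<exists>g. inj g \<and> (\<forall>x\<in>S'. f x = g (fst x))"
      using const_on_columns by blast
    then show ?thesis by blast
  qed
qed

end

end


theorem mainTheorem6:
  fixes W :: "(nat \<times> nat) set set"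
  assumes "non_P_point_std W"
    and "weakly_Ramsey 2 4 W"
  shows "three_functions_property W"
  unfolding three_functions_property_def
proof
  fix f :: "nat \<times> nat \<Rightarrow> nat"
  obtain H K where "H \<in> W" "finite K" "card K \<le> 4"
    and "\<And>x y. x \<in> H \<Longrightarrow> y \<in> H \<Longrightarrow> x < y \<Longrightarrow> pair_colour f x y \<in> K"
    using weakly_Ramsey_ordered_pairs[OF assms(2), of "pair_colour f"] pair_colour_less by blast
  then interpret few_pair_colours f H K by unfold_locales
  let ?A = "{x\<in>H. finite (column_fibre f H x)}" and ?B = "{x\<in>H. infinite (column_fibre f H x)}"
  from ultrafilter_split[OF non_P_point_std_ultrafilter[OF assms(1)] \<open>H \<in> W\<close>,
      of "\<lambda>x. finite (column_fibre f H x)"]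
  consider "?A \<in> W" | "?B \<in> W" by blast
  then show "\<exists>H\<in>W. (\<exists>c. \<forall>x\<in>H. f x = c) \<or> inj_on f H \<or> (\<exists>g. inj g \<and> (\<forall>x\<in>H. f x = g (fst x)))"
  proof cases
    case 1
    have "finite (column_fibre f ?A x)" if "x \<in> ?A" for x
      using that by (auto elim: rev_finite_subset simp: column_fibre_def)
    then obtain S where "S \<in> W" "S \<subseteq> ?A" "column_spread f S"
      using non_P_point_std_column_spread_subset[OF assms(1) \<open>?A \<in> W\<close>] by blast
    moreover have "S \<subseteq> H" using \<open>S \<subseteq> ?A\<close> by blast
    ultimately have "inj_on f S"
      using inj_on_column_spread non_P_point_std_fst_unbounded[OF assms(1) \<open>S \<in> W\<close>] by blast
    with \<open>S \<in> W\<close> show ?thesis by blast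
  next
    case 2
    show ?thesis
      using repeating_const_or_factors_through_fst[OF _ column_repeating_infinite_fibres assms(1) 2]
      by (metis (no_types, lifting) mem_Collect_eq subsetI)
  qed
qed

end
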